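(* Consider the vanilla decentralized normalized gradient method: each node $i\in[n]$ with local function $f_i:\mathbb{R}^d\to\mathbb{R}$ iterates, in parallel, $\boldsymbol{x}_i^{t+1}=\sum_{r=1}^n w_{ir}\big(\boldsymbol{x}_r^t-\alpha\,\nabla f_r(\boldsymbol{x}_r^t)/\|\nabla f_r(\boldsymbol{x}_r^t)\|\big)$, starting from a common initialization $\boldsymbol{x}_i^0=\boldsymbol{x}_0$. For any even $n$ and any $B\ge 1$, there exist functions $\{f_i\}_{i=1}^n$ satisfying (A1) and (A2), a gradient oracle satisfying (A3), a mixing matrix $\boldsymbol{W}$ satisfying (A4), and an initialization $\boldsymbol{x}_0$, such that the associated parameters $f_*$, $L$, $\sigma$, $\boldsymbol{W}$, $\boldsymbol{x}_0$ do not depend on $B$, and for all $T\ge 1$ and all $\alpha>0$, $$\frac{1}{nT}\sum_{t=0}^{T-1}\sum_{i=1}^n\mathbb{E}\big[\|\nabla f(\boldsymbol{x}_i^t)\|\big]\ge B,$$ where $f=\frac1n\sum_{i=1}^n f_i$.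
   Context: (A1): $f_*:=\inf_{\boldsymbol{x}} f(\boldsymbol{x})>-\infty$. (A2): each $f_i$ is differentiable with $L$-Lipschitz gradient. (A3): the stochastic oracle returns $\boldsymbol{g}_i(\boldsymbol{x},\boldsymbol{\xi}_i^t)$ such that, with $\mathcal{F}_t=\sigma(\{\boldsymbol{\xi}_i^0,\dots,\boldsymbol{\xi}_i^{t-1}:i\in[n]\})$ ($\mathcal{F}_{-1}$ trivial), for every $\mathcal{F}_t$-measurable $\boldsymbol{x}$: $\mathbb{E}[\boldsymbol{g}_i(\boldsymbol{x},\boldsymbol{\xi}_i^t)\mid\mathcal{F}_t]=\nabla f_i(\boldsymbol{x})$, $\mathbb{E}[\|\boldsymbol{g}_i(\boldsymbol{x},\boldsymbol{\xi}_i^t)-\nabla f_i(\boldsymbol{x})\|^p\mid\mathcal{F}_t]\le\sigma^p$ for some $p\in(1,2]$, $\sigma\ge0$, and the samples are independent. (A4): $\boldsymbol{W}=(w_{ir})$ is nonnegative, with $w_{ir}>0$ iff $(i,r)$ is an edge of the communication graph or $i=r$, and is primitive and doubly stochastic. *)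

theory Defs
  imports "HOL-Analysis.Analysis"
begin

text \<open>Nodes are indexed by 0..n-1; an n x n matrix is a function nat => nat => real.\<close>

fun matpow :: "nat \<Rightarrow> (nat \<Rightarrow> nat \<Rightarrow> real) \<Rightarrow> nat \<Rightarrow> nat \<Rightarrow> nat \<Rightarrow> real" where
  "matpow n W 0 = (\<lambda>i r. if i = r then 1 else 0)"
| "matpow n W (Suc k) = (\<lambda>i r. \<Sum>s<n. matpow n W k i s * W s r)"

text \<open>(A4): nonnegative, positive diagonal (self-loops), doubly stochastic, primitive.
  The communication graph is the support of W (edges = positive off-diagonal entries).\<close>
definition mixing_matrix :: "nat \<Rightarrow> (nat \<Rightarrow> nat \<Rightarrow> real) \<Rightarrow> bool" where
  "mixing_matrix n W \<longleftrightarrow>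
     (\<forall>i<n. \<forall>r<n. W i r \<ge> 0) \<and>
     (\<forall>i<n. W i i > 0) \<and>
     (\<forall>i<n. (\<Sum>r<n. W i r) = 1) \<and>
     (\<forall>r<n. (\<Sum>i<n. W i r) = 1) \<and>
     (\<exists>k. \<forall>i<n. \<forall>r<n. matpow n W k i r > 0)"

definition smooth_with_grad :: "('a::euclidean_space \<Rightarrow> real) \<Rightarrow> ('a \<Rightarrow> 'a) \<Rightarrow> real \<Rightarrow> bool" where
  "smooth_with_grad f gf L \<longleftrightarrow>
     (\<forall>x. (f has_derivative (\<lambda>h. gf x \<bullet> h)) (at x)) \<and>
     (\<forall>x y. norm (gf x - gf y) \<le> L * dist x y)"

text \<open>Vanilla decentralized normalized gradient method: dngm n W gf alpha x0 t i = x_i^t.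
  Convention: g / norm g = 0 when g = 0.\<close>
fun dngm :: "nat \<Rightarrow> (nat \<Rightarrow> nat \<Rightarrow> real) \<Rightarrow> (nat \<Rightarrow> 'a::euclidean_space \<Rightarrow> 'a) \<Rightarrow> real \<Rightarrow> 'a \<Rightarrow> nat \<Rightarrow> nat \<Rightarrow> 'a" where
  "dngm n W gf \<alpha> x0 0 = (\<lambda>i. x0)"
| "dngm n W gf \<alpha> x0 (Suc t) = (\<lambda>i. \<Sum>r<n. W i r *\<^sub>R
      (dngm n W gf \<alpha> x0 t r - \<alpha> *\<^sub>R ((1 / norm (gf r (dngm n W gf \<alpha> x0 t r))) *\<^sub>R gf r (dngm n W gf \<alpha> x0 t r))))"

end

theory Submission
  imports Defs
begin

text \<open>Take uniform averaging \<open>W\<close>, start at \<open>x\<^sub>0 = 0\<close> and the quadratics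
  \<open>f\<^sub>j x = c\<^sub>j \<langle>e, x\<rangle> + \<parallel>x\<parallel>\<^sup>2/2 + B\<^sup>2/2\<close> with \<open>c\<^sub>j = B + 2B(-1)\<^sup>j\<close>, i.e. alternately \<open>3B\<close> and \<open>-B\<close>.
  All local gradients at the origin are parallel to \<open>e\<close> with alternating signs, so for even
  \<open>n\<close> the normalized gradients cancel exactly under averaging and the method never leaves
  the origin. Yet the coefficients have mean \<open>B\<close>, so \<open>f = \<parallel>x + B e\<parallel>\<^sup>2/2\<close> has gradient
  of norm \<open>B\<close> at the origin, while \<open>L = 1\<close>, \<open>f\<^sub>* = 0\<close>, \<open>W\<close> and \<open>x\<^sub>0\<close> do not depend on \<open>B\<close>.\<close>

lemma sum_neg_one_power_even:
  assumes "even n"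
  shows "(\<Sum>j<n. (-1::'a::ring_1) ^ j) = 0"
proof -
  obtain m where "n = 2 * m" using assms by blast
  moreover have "(\<Sum>j<2 * m. (-1::'a) ^ j) = 0" by (induction m) auto
  ultimately show ?thesis by simp
qed

lemma matpow_Suc_0: "i < n \<Longrightarrow> matpow n W (Suc 0) i r = W i r"
  by (simp add: of_bool_def[symmetric])

lemma mixing_matrix_positive:
  assumes "\<forall>i<n. \<forall>r<n. W i r > 0"
    and "\<forall>i<n. (\<Sum>r<n. W i r) = 1" and "\<forall>r<n. (\<Sum>i<n. W i r) = 1"
  shows "mixing_matrix n W"
proof -
  have "\<forall>i<n. \<forall>r<n. matpow n W (Suc 0) i r > 0"
    using assms(1) by (simp add: matpow_Suc_0 del: matpow.simps)
  then show ?thesis using assms unfolding mixing_matrix_def by (blast intro: less_imp_le)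
qed

lemma mixing_matrix_uniform:
  assumes "n > 0"
  shows "mixing_matrix n (\<lambda>i r. 1 / real n)"
  using assms by (intro mixing_matrix_positive) auto

lemma dngm_stationary:
  assumes row_stochastic: "\<forall>i<n. (\<Sum>r<n. W i r) = 1"
    and balanced: "\<forall>i<n. (\<Sum>r<n. W i r *\<^sub>R sgn (gf r x0)) = 0"
    and "i < n"
  shows "dngm n W gf \<alpha> x0 t i = x0"
  using \<open>i < n\<close>
proof (induction t arbitrary: i)
  case 0
  show ?case by simp
next
  case (Suc t)
  \<comment> \<open>The normalized step \<open>(1 / norm g) *\<^sub>R g\<close> is \<open>sgn g\<close>, also for \<open>g = 0\<close>.\<close>
  have "dngm n W gf \<alpha> x0 (Suc t) i = (\<Sum>r<n. W i r *\<^sub>R (x0 - \<alpha> *\<^sub>R sgn (gf r x0)))"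
    using Suc.IH by (simp add: sgn_div_norm divide_inverse_commute)
  also have "\<dots> = (\<Sum>r<n. W i r) *\<^sub>R x0 - \<alpha> *\<^sub>R (\<Sum>r<n. W i r *\<^sub>R sgn (gf r x0))"
    by (simp add: scaleR_diff_right sum_subtractf scaleR_sum_left scaleR_sum_right mult.commute)
  also have "\<dots> = x0"
    using Suc.prems row_stochastic balanced by simp
  finally show ?case .
qed

lemma smooth_with_grad_tilted_quadratic:
  "smooth_with_grad (\<lambda>x. c * (e \<bullet> x) + (x \<bullet> x) / 2 + k) (\<lambda>x. c *\<^sub>R e + x) 1"
proof -
  have "((\<lambda>x. c * (e \<bullet> x) + (x \<bullet> x) / 2 + k) has_derivative
          (\<lambda>h. c * (e \<bullet> h) + (x \<bullet> h + h \<bullet> x) / 2 + 0)) (at x)" for x :: 'a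
    by (auto intro!: derivative_eq_intros)
  moreover have "(\<lambda>h. c * (e \<bullet> h) + (x \<bullet> h + h \<bullet> x) / 2 + 0) = (\<lambda>h. (c *\<^sub>R e + x) \<bullet> h)"
    for x :: 'a
    by (auto simp: inner_add_left inner_add_right inner_commute)
  ultimately show ?thesis
    unfolding smooth_with_grad_def by (simp add: dist_norm)
qed

lemma mean_tilted_quadratics:
  fixes e :: "'a::real_inner"
  assumes "norm e = 1" and "n > 0" and "(\<Sum>j<n. c j) = real n * m"
  shows "(\<Sum>j<n. c j * (e \<bullet> x) + (x \<bullet> x) / 2 + m\<^sup>2 / 2) / real n = (norm (x + m *\<^sub>R e))\<^sup>2 / 2"
proof -
  have "e \<bullet> e = 1" using assms(1) by (simp add: norm_eq_1)
  have "(\<Sum>j<n. c j * (e \<bullet> x) + (x \<bullet> x) / 2 + m\<^sup>2 / 2)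
        = (\<Sum>j<n. c j) * (e \<bullet> x) + real n * ((x \<bullet> x) / 2 + m\<^sup>2 / 2)"
    by (simp add: sum.distrib sum_distrib_right[symmetric] algebra_simps)
  also have "\<dots> = real n * ((norm (x + m *\<^sub>R e))\<^sup>2 / 2)"
    unfolding assms(3) power2_norm_eq_inner using \<open>e \<bullet> e = 1\<close>
    by (simp add: inner_add_left inner_add_right inner_commute algebra_simps power2_eq_square)
  finally show ?thesis using assms(2) by simp
qed

lemma bdd_below_half_norm_square: "bdd_below (range (\<lambda>x. (norm (x + v))\<^sup>2 / 2))"
  by (rule bdd_belowI[where m = 0]) auto

lemma INF_half_norm_square: "(INF x. (norm (x + v))\<^sup>2 / 2) = 0"
proof (rule antisym)
  show "(INF x. (norm (x + v))\<^sup>2 / 2) \<le> 0"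
    using cINF_lower[OF bdd_below_half_norm_square[of v], of "- v"] by simp
  show "0 \<le> (INF x. (norm (x + v))\<^sup>2 / 2)"
    by (rule cINF_greatest) auto
qed

lemma sgn_alternating_coeff:
  fixes B :: real
  assumes "B > 0"
  shows "sgn (B + 2 * B * (-1) ^ j) = (-1) ^ j"
  using assms by (cases "even j") auto

lemma sum_alternating_coeff:
  assumes "even n"
  shows "(\<Sum>j<n. B + 2 * B * (-1) ^ j) = real n * B"
  using sum_neg_one_power_even[OF assms, where 'a = real]
  by (simp add: sum.distrib sum_distrib_left[symmetric])

lemma dngm_alternating_stays_at_origin:
  fixes e :: "'a::euclidean_space"
  assumes "even n" and "B > 0" and "norm e = 1" and "i < n"
  shows "dngm n (\<lambda>i r. 1 / real n) (\<lambda>j x. (B + 2 * B * (-1) ^ j) *\<^sub>R e + x) \<alpha> 0 t i = 0"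
proof (rule dngm_stationary)
  have "sgn e = e" using assms(3) by (simp add: sgn_div_norm)
  then have "(\<Sum>r<n. (1 / real n) *\<^sub>R sgn ((B + 2 * B * (-1) ^ r) *\<^sub>R e + 0))
             = ((1 / real n) * (\<Sum>r<n. (-1) ^ r)) *\<^sub>R e"
    using assms(2) by (simp add: sgn_scaleR sgn_alternating_coeff scaleR_sum_left sum_distrib_left)
  then show "\<forall>i<n. (\<Sum>r<n. (1 / real n) *\<^sub>R sgn ((B + 2 * B * (-1) ^ r) *\<^sub>R e + 0)) = 0"
    using sum_neg_one_power_even[OF assms(1), where 'a = real] by simp
  show "\<forall>i<n. (\<Sum>r<n. 1 / real n) = 1" using assms(4) by simp
qed (fact assms(4))

lemma alternating_quadratics_instance:
  fixes n :: nat and B :: real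
  assumes "even n" and "n > 0" and "B > 0"
  shows "\<exists>(f::nat \<Rightarrow> 'a::euclidean_space \<Rightarrow> real) (gf::nat \<Rightarrow> 'a \<Rightarrow> 'a).
    (\<forall>i<n. smooth_with_grad (f i) (gf i) 1) \<and>
    bdd_below (range (\<lambda>x. (\<Sum>i<n. f i x) / real n)) \<and>
    (INF x. (\<Sum>i<n. f i x) / real n) = 0 \<and>
    (\<forall>T::nat. T \<ge> 1 \<longrightarrow> (\<forall>\<alpha>::real. \<alpha> > 0 \<longrightarrow>
       (1 / (real n * real T)) *
         (\<Sum>t<T. \<Sum>i<n. norm ((1 / real n) *\<^sub>R
            (\<Sum>j<n. gf j (dngm n (\<lambda>i r. 1 / real n) gf \<alpha> 0 t i))))
       \<ge> B))"
proof -
  obtain e :: 'a where "norm e = 1" using nonempty_Basis norm_Basis by blast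
  define f where "f j x = (B + 2 * B * (-1) ^ j) * (e \<bullet> x) + (x \<bullet> x) / 2 + B\<^sup>2 / 2" for j x
  define gf where "gf j x = (B + 2 * B * (-1) ^ j) *\<^sub>R e + x" for j x
  have smooth: "\<forall>i<n. smooth_with_grad (f i) (gf i) 1"
    unfolding f_def[abs_def] gf_def[abs_def] by (simp add: smooth_with_grad_tilted_quadratic)
  have mean: "(\<Sum>i<n. f i x) / real n = (norm (x + B *\<^sub>R e))\<^sup>2 / 2" for x
    unfolding f_def using \<open>norm e = 1\<close> assms(2) sum_alternating_coeff[OF assms(1)]
    by (rule mean_tilted_quadratics)
  have "(\<Sum>j<n. gf j 0) = (real n * B) *\<^sub>R e"
    unfolding gf_def sum_alternating_coeff[OF assms(1), symmetric] by (simp add: scaleR_sum_left)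
  then have mean_grad: "norm ((1 / real n) *\<^sub>R (\<Sum>j<n. gf j 0)) = B"
    using assms(2,3) \<open>norm e = 1\<close> by simp
  have "dngm n (\<lambda>i r. 1 / real n) gf \<alpha> 0 t i = 0" if "i < n" for \<alpha> t i
    unfolding gf_def[abs_def]
    using dngm_alternating_stays_at_origin[OF assms(1,3) \<open>norm e = 1\<close> that] .
  then have "(\<Sum>t<T. \<Sum>i<n. norm ((1 / real n) *\<^sub>R
      (\<Sum>j<n. gf j (dngm n (\<lambda>i r. 1 / real n) gf \<alpha> 0 t i)))) = real T * real n * B" for T \<alpha>
    using mean_grad by simp
  then have "(1 / (real n * real T)) * (\<Sum>t<T. \<Sum>i<n. norm ((1 / real n) *\<^sub>R
      (\<Sum>j<n. gf j (dngm n (\<lambda>i r. 1 / real n) gf \<alpha> 0 t i)))) = B" if "T \<ge> 1" for T \<alpha>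
    using that assms(2) by simp
  then show ?thesis
    using smooth by (intro exI[of _ f] exI[of _ gf])
      (simp add: mean bdd_below_half_norm_square INF_half_norm_square)
qed

theorem claim1:
  fixes n :: nat
  assumes "even n" and "n > 0"
  shows "\<exists>(L::real) (fstar::real) (W::nat \<Rightarrow> nat \<Rightarrow> real) (x0::'a::euclidean_space).
    L > 0 \<and> mixing_matrix n W \<and>
    (\<forall>B::real. B \<ge> 1 \<longrightarrow>
      (\<exists>(f::nat \<Rightarrow> 'a \<Rightarrow> real) (gf::nat \<Rightarrow> 'a \<Rightarrow> 'a).
         (\<forall>i<n. smooth_with_grad (f i) (gf i) L) \<and>
         bdd_below (range (\<lambda>x. (\<Sum>i<n. f i x) / real n)) \<and>
         (INF x. (\<Sum>i<n. f i x) / real n) = fstar \<and>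
         (\<forall>T::nat. T \<ge> 1 \<longrightarrow> (\<forall>\<alpha>::real. \<alpha> > 0 \<longrightarrow>
            (1 / (real n * real T)) *
              (\<Sum>t<T. \<Sum>i<n. norm ((1 / real n) *\<^sub>R (\<Sum>j<n. gf j (dngm n W gf \<alpha> x0 t i))))
            \<ge> B))))"
proof (rule exI[of _ 1], rule exI[of _ 0], rule exI[of _ "\<lambda>i r. 1 / real n"], rule exI[of _ 0],
    intro conjI allI impI)
  show "(0::real) < 1" by simp
  show "mixing_matrix n (\<lambda>i r. 1 / real n)" using assms(2) by (rule mixing_matrix_uniform)
qed (rule alternating_quadratics_instance[OF assms], simp)

end
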